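(* Let $P \subseteq \mathbb{R}^7$ be an associative $3$-plane, and let $\Theta(P) = \Lambda^2(P) \oplus \Psi(P)$. Then $\Theta(P)$ is a Lie subalgebra of $\mathfrak{so}(7) = \Lambda^2(\mathbb{R}^7)$ isomorphic to $\mathfrak{so}(4)$, and the direct sum $\Lambda^2(P) \oplus \Psi(P)$ is orthogonal. Also $\Theta(P)$ is the (non-orthogonal) direct sum $\Theta(P) = \Lambda^2(P) \oplus (P \lrcorner \varphi)$. Finally, if $P, Q$ are distinct associative $3$-planes, then $\Theta(P) \cap \Theta(Q)$ is the Lie subalgebra - $\Theta(P) \cap \Theta(Q) = \{0\}$ if $P \cap Q = \{0\}$; - $\Theta(P) \cap \Theta(Q) = \mathrm{Span}\{ v \lrcorner \varphi \} \cong \mathfrak{so}(2)$ if $P \cap Q$ is $1$-dimensional with orthonormal basis $\{v\}$.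
   Context: Equip $\mathbb{R}^7$ with its standard inner product, orientation and basis $e_1,\dots,e_7$. Let $\varphi = e_{123} - e_{167} - e_{527} - e_{563} - e_{415} - e_{426} - e_{437}$ ($e_{ijk} = e_i\wedge e_j\wedge e_k$) and $\psi = \star\varphi = e_{4567} - e_{4523} - e_{4163} - e_{4127} - e_{2637} - e_{1537} - e_{1526}$. The cross product is defined by $\langle u \times v, w\rangle = \varphi(u,v,w)$; a $3$-dimensional subspace is associative if it is closed under $\times$. A skew bilinear form $X$ is identified with the skew-adjoint operator $X$ given by $X(u,v) = \langle X(u), v\rangle$, so $\Lambda^2(\mathbb{R}^7) = \mathfrak{so}(7)$ with Lie bracket the commutator of operators. Inner product on $\Lambda^2$: $\langle X, Y\rangle = \sum_{i,j} X(e_i,e_j)Y(e_i,e_j)$. For $u,v \in \mathbb{R}^7$: $u \wedge v$ is the 2-form $(a,b) \mapsto \langle u,a\rangle\langle v,b\rangle - \langle u,b\rangle\langle v,a\rangle$; $u \lrcorner \varphi$ is the 2-form $(a,b) \mapsto \varphi(u,a,b)$; $\Psi_{uv}$ is the 2-form $(a,b) \mapsto \psi(u,v,a,b)$. For a subspace $V$: $\Lambda^2(V) = \mathrm{Span}\{u\wedge v : u,v \in V\}$, $V \lrcorner \varphi = \{ v \lrcorner \varphi : v \in V\}$, and $\Psi(V) = \mathrm{Span}\{\Psi_{uv} : u, v \in V\}$. *)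

theory Defs
  imports "HOL-Analysis.Analysis"
begin

text \<open>R^7 is real^7; the basis vector e_k (k = 1..7) is axis (of_nat k) 1,
  i.e. the component index of_nat k :: 7 (note of_nat 7 = 0 in type 7, so the
  seven indices are distinct).\<close>

type_synonym R7 = "real^7"

definition co :: "R7 \<Rightarrow> nat \<Rightarrow> real" where
  "co u i = u $ (of_nat i :: 7)"

definition ebasis :: "nat \<Rightarrow> R7" where
  "ebasis i = axis (of_nat i :: 7) 1"

definition e3 :: "nat \<Rightarrow> nat \<Rightarrow> nat \<Rightarrow> R7 \<Rightarrow> R7 \<Rightarrow> R7 \<Rightarrow> real" where
  "e3 i j k u v w =
     co u i * (co v j * co w k - co v k * co w j)
   - co u j * (co v i * co w k - co v k * co w i)
   + co u k * (co v i * co w j - co v j * co w i)"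

definition e4 :: "nat \<Rightarrow> nat \<Rightarrow> nat \<Rightarrow> nat \<Rightarrow> R7 \<Rightarrow> R7 \<Rightarrow> R7 \<Rightarrow> R7 \<Rightarrow> real" where
  "e4 i j k l a b c d =
     co a i * e3 j k l b c d - co a j * e3 i k l b c d
   + co a k * e3 i j l b c d - co a l * e3 i j k b c d"

definition phi :: "R7 \<Rightarrow> R7 \<Rightarrow> R7 \<Rightarrow> real" where
  "phi u v w = e3 1 2 3 u v w - e3 1 6 7 u v w - e3 5 2 7 u v w - e3 5 6 3 u v w
     - e3 4 1 5 u v w - e3 4 2 6 u v w - e3 4 3 7 u v w"

definition psi :: "R7 \<Rightarrow> R7 \<Rightarrow> R7 \<Rightarrow> R7 \<Rightarrow> real" where
  "psi a b c d = e4 4 5 6 7 a b c d - e4 4 5 2 3 a b c d - e4 4 1 6 3 a b c d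
     - e4 4 1 2 7 a b c d - e4 2 6 3 7 a b c d - e4 1 5 3 7 a b c d - e4 1 5 2 6 a b c d"

definition cross7 :: "R7 \<Rightarrow> R7 \<Rightarrow> R7" where
  "cross7 u v = (\<chi> k. phi u v (axis k 1))"

definition associative :: "R7 set \<Rightarrow> bool" where
  "associative P \<longleftrightarrow> subspace P \<and> dim P = 3 \<and> (\<forall>u\<in>P. \<forall>v\<in>P. cross7 u v \<in> P)"

text \<open>A bilinear form B is identified with the operator X with B(u,v) = <X u, v>,
  i.e. the matrix with X $ j $ i = B(e_i, e_j).  2-forms are thus elements of real^7^7.\<close>
definition op_of_form :: "(R7 \<Rightarrow> R7 \<Rightarrow> real) \<Rightarrow> real^7^7" where
  "op_of_form B = (\<chi> j i. B (axis i 1) (axis j 1))"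

definition wedge :: "R7 \<Rightarrow> R7 \<Rightarrow> real^7^7" where
  "wedge u v = op_of_form (\<lambda>a b. (u \<bullet> a) * (v \<bullet> b) - (u \<bullet> b) * (v \<bullet> a))"

definition hook :: "R7 \<Rightarrow> real^7^7" where
  "hook u = op_of_form (\<lambda>a b. phi u a b)"

definition PsiF :: "R7 \<Rightarrow> R7 \<Rightarrow> real^7^7" where
  "PsiF u v = op_of_form (\<lambda>a b. psi u v a b)"

definition Lambda2 :: "R7 set \<Rightarrow> (real^7^7) set" where
  "Lambda2 V = span {wedge u v | u v. u \<in> V \<and> v \<in> V}"

definition hookset :: "R7 set \<Rightarrow> (real^7^7) set" where
  "hookset V = {hook v | v. v \<in> V}"

definition PsiS :: "R7 set \<Rightarrow> (real^7^7) set" where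
  "PsiS V = span {PsiF u v | u v. u \<in> V \<and> v \<in> V}"

definition form_inner :: "real^7^7 \<Rightarrow> real^7^7 \<Rightarrow> real" where
  "form_inner X Y = (\<Sum>i\<in>UNIV. \<Sum>j\<in>UNIV. ((X *v axis i 1) \<bullet> axis j 1) * ((Y *v axis i 1) \<bullet> axis j 1))"

definition bracket :: "real^'n^'n \<Rightarrow> real^'n^'n \<Rightarrow> real^'n^'n" where
  "bracket X Y = X ** Y - Y ** X"

definition setsum :: "'a::ab_group_add set \<Rightarrow> 'a set \<Rightarrow> 'a set" where
  "setsum A B = {x + y | x y. x \<in> A \<and> y \<in> B}"

definition Theta :: "R7 set \<Rightarrow> (real^7^7) set" where
  "Theta P = setsum (Lambda2 P) (PsiS P)"

definition lie_subalgebra :: "(real^'n^'n) set \<Rightarrow> bool" where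
  "lie_subalgebra A \<longleftrightarrow> subspace A \<and> (\<forall>X\<in>A. \<forall>Y\<in>A. bracket X Y \<in> A)"

definition so :: "(real^'n^'n) set" where
  "so = {A. transpose A = - A}"

definition lie_isomorphic :: "(real^'n^'n) set \<Rightarrow> (real^'m^'m) set \<Rightarrow> bool" where
  "lie_isomorphic A B \<longleftrightarrow> (\<exists>f. linear f \<and> bij_betw f A B \<and>
      (\<forall>X\<in>A. \<forall>Y\<in>A. f (bracket X Y) = bracket (f X) (f Y)))"

end

theory Submission
  imports Defs
begin

text \<open>
  Let u, v, w = u \<times> v be an orthonormal frame of the associative plane P. Closure of P under
  the cross product makes the associator chi vanish on P, and from this one sees that every
  element of Theta(P) acts on P as s \<times> _ and on the orthogonal complement of P as t \<times> _, for
  a unique pair s, t in P (the operator theta s t): Lambda2(P) is the part t = 0, Psi(P) the part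
  s = 0, and v \<lrcorner> phi is theta v v. Brackets are
  [theta s t, theta s' t'] = theta (s \<times> s') (-2 t \<times> t'), so Theta(P) is the sum of two
  copies of (P, \<times>) = so(3), which is so(4).

  If X lies in Theta(P) and in Theta(Q) for distinct associative P and Q, compare the two
  descriptions. The difference e of the t-parts satisfies
  e \<times> a = d' \<times> proj_Q a - d \<times> proj_P a, whose right-hand side has rank at most 2 + 2 < 6,
  so e = 0. Then d \<times> _ maps P into P \<inter> Q, which has dimension at most 1 because two
  associative planes sharing a 2-plane coincide; hence d = 0 and X = t \<lrcorner> phi with t in P \<inter> Q.
\<close>

lemma exhaust_7:
  fixes x :: 7
  shows "x = 0 \<or> x = 1 \<or> x = 2 \<or> x = 3 \<or> x = 4 \<or> x = 5 \<or> x = 6"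
proof (induct x)
  case (of_int z)
  then have "z = 0 \<or> z = 1 \<or> z = 2 \<or> z = 3 \<or> z = 4 \<or> z = 5 \<or> z = 6" by fastforce
  then show ?case by auto
qed

lemma UNIV_7: "(UNIV :: 7 set) = {0, 1, 2, 3, 4, 5, 6}"
  using exhaust_7 by auto

lemma sum_7: "sum f (UNIV :: 7 set) = f 0 + f 1 + f 2 + f 3 + f 4 + f 5 + f 6"
  unfolding UNIV_7 by (simp add: ac_simps)

lemma inner_R7:
  "(x :: R7) \<bullet> y = x$0 * y$0 + x$1 * y$1 + x$2 * y$2 + x$3 * y$3 + x$4 * y$4 + x$5 * y$5 + x$6 * y$6"
  by (simp add: inner_vec_def sum_7)

lemma R7_eq_iff:
  "(x :: R7) = y \<longleftrightarrow>
     x$0 = y$0 \<and> x$1 = y$1 \<and> x$2 = y$2 \<and> x$3 = y$3 \<and> x$4 = y$4 \<and> x$5 = y$5 \<and> x$6 = y$6"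
proof
  assume "x$0 = y$0 \<and> x$1 = y$1 \<and> x$2 = y$2 \<and> x$3 = y$3 \<and> x$4 = y$4 \<and> x$5 = y$5 \<and> x$6 = y$6"
  then have "x $ i = y $ i" for i
    using exhaust_7[of i] by auto
  then show "x = y"
    by (simp add: vec_eq_iff)
qed simp

lemma seven_eq_0 [simp]: "(of_nat 7 :: 7) = 0" "(7 :: 7) = 0"
  by simp_all

section \<open>The cross product\<close>

lemma cross7_components:
  "cross7 u v $ 1 = u$2 * v$3 - u$3 * v$2 + u$4 * v$5 - u$5 * v$4 - u$6 * v$0 + u$0 * v$6"
  "cross7 u v $ 2 = - u$1 * v$3 + u$3 * v$1 + u$4 * v$6 + u$5 * v$0 - u$6 * v$4 - u$0 * v$5"
  "cross7 u v $ 3 = u$1 * v$2 - u$2 * v$1 + u$4 * v$0 - u$5 * v$6 + u$6 * v$5 - u$0 * v$4"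
  "cross7 u v $ 4 = - u$1 * v$5 - u$2 * v$6 - u$3 * v$0 + u$5 * v$1 + u$6 * v$2 + u$0 * v$3"
  "cross7 u v $ 5 = u$1 * v$4 - u$2 * v$0 + u$3 * v$6 - u$4 * v$1 - u$6 * v$3 + u$0 * v$2"
  "cross7 u v $ 6 = u$1 * v$0 + u$2 * v$4 - u$3 * v$5 - u$4 * v$2 + u$5 * v$3 - u$0 * v$1"
  "cross7 u v $ 0 = - u$1 * v$6 + u$2 * v$5 + u$3 * v$4 - u$4 * v$3 - u$5 * v$2 + u$6 * v$1"
  unfolding cross7_def phi_def e3_def co_def by (simp_all add: axis_def algebra_simps)

lemma phi_eq_inner_cross7: "phi a b c = cross7 a b \<bullet> c"
  unfolding phi_def e3_def co_def inner_R7 cross7_components by (simp add: algebra_simps)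

lemma bilinear_cross7: "bilinear cross7"
  unfolding bilinear_def linear_iff R7_eq_iff by (simp add: cross7_components algebra_simps)

lemmas cross7_add_left = bilinear_ladd[OF bilinear_cross7]
  and cross7_add_right = bilinear_radd[OF bilinear_cross7]
  and cross7_diff_left = bilinear_lsub[OF bilinear_cross7]
  and cross7_diff_right = bilinear_rsub[OF bilinear_cross7]
  and cross7_scaleR_left = bilinear_lmul[OF bilinear_cross7]
  and cross7_scaleR_right = bilinear_rmul[OF bilinear_cross7]
  and cross7_minus_left = bilinear_lneg[OF bilinear_cross7]
  and cross7_minus_right = bilinear_rneg[OF bilinear_cross7]
  and cross7_zero_left [simp] = bilinear_lzero[OF bilinear_cross7]
  and cross7_zero_right [simp] = bilinear_rzero[OF bilinear_cross7]

lemmas cross7_linear = cross7_add_left cross7_add_right cross7_diff_left cross7_diff_right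
  cross7_scaleR_left cross7_scaleR_right cross7_minus_left cross7_minus_right

lemma linear_cross7: "linear (cross7 a)"
  using bilinear_cross7 by (simp add: bilinear_def)

lemma cross7_skew: "cross7 a b = - cross7 b a"
  unfolding R7_eq_iff by (simp add: cross7_components)

lemma cross7_self [simp]: "cross7 a a = 0"
  unfolding R7_eq_iff by (simp add: cross7_components)

lemma inner_cross7_assoc: "cross7 a b \<bullet> c = a \<bullet> cross7 b c"
  unfolding inner_R7 cross7_components by (simp add: algebra_simps)

lemma inner_cross7_self [simp]:
  "cross7 a b \<bullet> a = 0" "cross7 a b \<bullet> b = 0" "a \<bullet> cross7 a b = 0" "b \<bullet> cross7 a b = 0"
  unfolding inner_R7 cross7_components by (simp_all add: algebra_simps)

lemma inner_cross7_cross7: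
  "cross7 a c \<bullet> cross7 b c = (a \<bullet> b) * (c \<bullet> c) - (a \<bullet> c) * (b \<bullet> c)"
  unfolding inner_R7 cross7_components by (simp add: algebra_simps)

lemma cross7_cross7_self: "cross7 a (cross7 a b) = (a \<bullet> b) *\<^sub>R a - (a \<bullet> a) *\<^sub>R b"
  unfolding R7_eq_iff by (simp add: cross7_components inner_R7 algebra_simps)

lemma cross7_cross7_inverse:
  assumes "e \<noteq> 0" "e \<bullet> x = 0"
  shows "cross7 e ((- 1 / (e \<bullet> e)) *\<^sub>R cross7 e x) = x"
  using assms by (simp add: cross7_scaleR_right cross7_minus_right cross7_cross7_self)

lemma range_cross7:
  assumes "e \<noteq> 0"
  shows "range (cross7 e) = {x. e \<bullet> x = 0}"
proof
  show "{x. e \<bullet> x = 0} \<subseteq> range (cross7 e)"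
  proof
    fix x
    assume "x \<in> {x. e \<bullet> x = 0}"
    then have "cross7 e ((- 1 / (e \<bullet> e)) *\<^sub>R cross7 e x) = x"
      using cross7_cross7_inverse[OF assms] by simp
    then show "x \<in> range (cross7 e)"
      by (metis rangeI)
  qed
qed auto

lemma cross7_cross7_polar:
  "cross7 a (cross7 b c) + cross7 (cross7 a b) c
    = (2 * (a \<bullet> c)) *\<^sub>R b - (b \<bullet> c) *\<^sub>R a - (a \<bullet> b) *\<^sub>R c"
  unfolding R7_eq_iff by (simp add: cross7_components inner_R7 algebra_simps)

lemma cross7_cross7_orthogonal:
  assumes "a \<bullet> c = 0" "b \<bullet> c = 0"
  shows "cross7 a (cross7 b c) = - cross7 (cross7 a b) c - (a \<bullet> b) *\<^sub>R c"
  using cross7_cross7_polar[of a b c] assms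
  by (simp add: inner_commute eq_neg_iff_add_eq_0 algebra_simps)

lemma cross7_commutator_orthogonal:
  assumes "t \<bullet> r = 0" "t' \<bullet> r = 0"
  shows "cross7 t (cross7 t' r) - cross7 t' (cross7 t r) = cross7 ((-2) *\<^sub>R cross7 t t') r"
proof -
  have tt'r: "cross7 t (cross7 t' r) = - cross7 (cross7 t t') r - (t \<bullet> t') *\<^sub>R r"
    using assms by (rule cross7_cross7_orthogonal)
  have "cross7 t' (cross7 t r) = - cross7 (cross7 t' t) r - (t' \<bullet> t) *\<^sub>R r"
    using assms by (simp add: cross7_cross7_orthogonal)
  also have "\<dots> = cross7 (cross7 t t') r - (t \<bullet> t') *\<^sub>R r"
    by (simp add: cross7_skew[of t' t] cross7_minus_left inner_commute)
  finally show ?thesis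
    unfolding tt'r cross7_scaleR_left by (simp add: algebra_simps scaleR_2)
qed

definition chi :: "R7 \<Rightarrow> R7 \<Rightarrow> R7 \<Rightarrow> R7" where
  "chi a b c = cross7 a (cross7 b c) + (a \<bullet> b) *\<^sub>R c - (a \<bullet> c) *\<^sub>R b"

lemma psi_eq_inner_chi: "psi a b c d = chi a b c \<bullet> d"
  unfolding psi_def e4_def e3_def co_def chi_def inner_R7 inner_add_left inner_diff_left
  by (simp add: cross7_components algebra_simps)

lemma linear_chi: "linear (chi a b)"
  by (rule linearI) (simp_all add: chi_def cross7_linear inner_add_right algebra_simps)

lemma op_of_form_inner: "op_of_form (\<lambda>a b. F a \<bullet> b) = matrix F"
  by (simp add: op_of_form_def matrix_def inner_axis)

lemma matrix_apply: "linear f \<Longrightarrow> matrix f *v x = f x"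
  for f :: "real^'n \<Rightarrow> real^'m"
  by (simp add: matrix_works linear_matrix_vector_mul_eq)

lemma hook_apply: "hook a *v x = cross7 a x"
proof -
  have "hook a = matrix (cross7 a)"
    unfolding hook_def phi_eq_inner_cross7 op_of_form_inner ..
  then show ?thesis
    by (simp add: matrix_apply linear_cross7)
qed

lemma linear_hook: "linear hook"
  by (rule linearI) (simp_all add: matrix_eq hook_apply cross7_linear
      matrix_vector_mult_add_rdistrib scaleR_matrix_vector_assoc[symmetric])

lemma hook_eq_0_iff: "hook a = 0 \<longleftrightarrow> a = 0"
proof
  assume "hook a = 0"
  then have "range (cross7 a) = {0}"
    by (auto simp flip: hook_apply)
  then show "a = 0"
    using range_cross7[of a] dim_hyperplane[of a] by (cases "a = 0") auto
qed (simp add: linear_0[OF linear_hook])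

lemma wedge_apply: "wedge a b *v x = (a \<bullet> x) *\<^sub>R b - (b \<bullet> x) *\<^sub>R a"
proof -
  have "wedge a b = matrix (\<lambda>x. (a \<bullet> x) *\<^sub>R b - (b \<bullet> x) *\<^sub>R a)"
    unfolding wedge_def op_of_form_inner[symmetric]
    by (rule arg_cong[where f = op_of_form]) (simp add: fun_eq_iff inner_diff_left mult.commute)
  moreover have "linear (\<lambda>x. (a \<bullet> x) *\<^sub>R b - (b \<bullet> x) *\<^sub>R a)"
    by (rule linearI) (simp_all add: inner_add_right algebra_simps)
  ultimately show ?thesis
    by (simp add: matrix_apply)
qed

lemma PsiF_apply: "PsiF a b *v x = chi a b x"
  unfolding PsiF_def psi_eq_inner_chi op_of_form_inner by (simp add: matrix_apply linear_chi)

lemma form_inner_eq_sum: "form_inner X Y = (\<Sum>i\<in>UNIV. (X *v axis i 1) \<bullet> (Y *v axis i 1))"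
  unfolding form_inner_def inner_axis by (simp add: inner_vec_def)

lemma bracket_apply: "bracket X Y *v a = X *v (Y *v a) - Y *v (X *v a)"
  for X Y :: "real^'n^'n"
  by (simp add: bracket_def matrix_vector_mult_diff_rdistrib matrix_vector_mul_assoc)

lemma bracket_scaleR_self: "bracket (a *\<^sub>R M) (b *\<^sub>R M) = (0 :: real^'n^'n)"
  unfolding matrix_eq bracket_apply
  by (simp add: scaleR_matrix_vector_assoc[symmetric] matrix_vector_mult_scaleR)

lemma lie_subalgebra_Int:
  "lie_subalgebra A \<Longrightarrow> lie_subalgebra B \<Longrightarrow> lie_subalgebra (A \<inter> B)"
  unfolding lie_subalgebra_def by (auto intro: subspace_inter)

lemma subspace_Theta: "subspace (Theta V)"
  unfolding Theta_def setsum_def Lambda2_def PsiS_def by (intro subspace_sums subspace_span)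

section \<open>The Lie algebras so(4) and so(2)\<close>

lemma so_skew:
  fixes A :: "real^'n^'n"
  assumes "A \<in> so"
  shows "A $ j $ i = - A $ i $ j"
proof -
  have "transpose A $ i $ j = (- A) $ i $ j"
    using assms by (simp add: so_def)
  then show ?thesis
    by (simp add: transpose_def)
qed

lemma vector_4 [simp]:
  "(vector [a, b, c, d] :: ('a::zero)^4) $ 1 = a"
  "(vector [a, b, c, d] :: ('a::zero)^4) $ 2 = b"
  "(vector [a, b, c, d] :: ('a::zero)^4) $ 3 = c"
  "(vector [a, b, c, d] :: ('a::zero)^4) $ 4 = d"
  unfolding vector_def by simp_all

text \<open>The splitting so(4) = so(3) \<oplus> so(3) into self-dual and anti-self-dual parts, with x and
  y the coordinates of the two factors.\<close>

definition so4_of :: "real^3 \<Rightarrow> real^3 \<Rightarrow> real^4^4" where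
  "so4_of x y = (1/2) *\<^sub>R vector [
     vector [0, - (x$3 + y$3), x$2 + y$2, x$1 - y$1],
     vector [x$3 + y$3, 0, - (x$1 + y$1), x$2 - y$2],
     vector [- (x$2 + y$2), x$1 + y$1, 0, x$3 - y$3],
     vector [y$1 - x$1, y$2 - x$2, y$3 - x$3, 0]]"

lemma so4_of_entries:
  "so4_of x y $ 1 $ 1 = 0" "so4_of x y $ 1 $ 2 = - (x$3 + y$3) / 2"
  "so4_of x y $ 1 $ 3 = (x$2 + y$2) / 2" "so4_of x y $ 1 $ 4 = (x$1 - y$1) / 2"
  "so4_of x y $ 2 $ 1 = (x$3 + y$3) / 2" "so4_of x y $ 2 $ 2 = 0"
  "so4_of x y $ 2 $ 3 = - (x$1 + y$1) / 2" "so4_of x y $ 2 $ 4 = (x$2 - y$2) / 2"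
  "so4_of x y $ 3 $ 1 = - (x$2 + y$2) / 2" "so4_of x y $ 3 $ 2 = (x$1 + y$1) / 2"
  "so4_of x y $ 3 $ 3 = 0" "so4_of x y $ 3 $ 4 = (x$3 - y$3) / 2"
  "so4_of x y $ 4 $ 1 = (y$1 - x$1) / 2" "so4_of x y $ 4 $ 2 = (y$2 - x$2) / 2"
  "so4_of x y $ 4 $ 3 = (y$3 - x$3) / 2" "so4_of x y $ 4 $ 4 = 0"
  unfolding so4_of_def by simp_all

lemma so4_of_eq_iff: "so4_of x y = so4_of x' y' \<longleftrightarrow> x = x' \<and> y = y'"
  unfolding vec_eq_iff forall_3 forall_4 so4_of_entries by auto

lemma so4_of_in_so: "so4_of x y \<in> so"
  unfolding so_def by (simp add: vec_eq_iff forall_4 transpose_def so4_of_entries field_simps)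

lemma so4_of_bracket: "bracket (so4_of x y) (so4_of x' y') = so4_of (cross3 x x') (cross3 y y')"
  unfolding bracket_def vec_eq_iff forall_4
  by (simp add: matrix_matrix_mult_def sum_4 so4_of_entries cross3_def algebra_simps divide_simps)

lemma so4_of_surj:
  assumes "A \<in> so"
  shows "A = so4_of (vector [A$1$4 - A$2$3, A$1$3 + A$2$4, A$3$4 - A$1$2])
                    (vector [- A$1$4 - A$2$3, A$1$3 - A$2$4, - A$1$2 - A$3$4])"
proof -
  note skew = so_skew[OF assms]
  have "A$1$1 = 0" "A$2$2 = 0" "A$3$3 = 0" "A$4$4 = 0"
    using skew[of 1 1] skew[of 2 2] skew[of 3 3] skew[of 4 4] by simp_all
  moreover have "A$2$1 = - A$1$2" "A$3$1 = - A$1$3" "A$4$1 = - A$1$4"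
    "A$3$2 = - A$2$3" "A$4$2 = - A$2$4" "A$4$3 = - A$3$4"
    using skew by blast+
  ultimately show ?thesis
    unfolding vec_eq_iff forall_4 so4_of_entries by simp
qed

definition so2_generator :: "real^2^2" where
  "so2_generator = vector [vector [0, -1], vector [1, 0]]"

lemma so2_eq_range: "(so :: (real^2^2) set) = range (\<lambda>c. c *\<^sub>R so2_generator)"
proof
  show "range (\<lambda>c. c *\<^sub>R so2_generator) \<subseteq> so"
    by (auto simp: so_def so2_generator_def vec_eq_iff forall_2 transpose_def)
  show "so \<subseteq> range (\<lambda>c. c *\<^sub>R so2_generator)"
  proof
    fix A :: "real^2^2"
    assume "A \<in> so"
    have "A = (A $ 2 $ 1) *\<^sub>R so2_generator"
      using so_skew[OF \<open>A \<in> so\<close>, of 1 1] so_skew[OF \<open>A \<in> so\<close>, of 2 2]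
        so_skew[OF \<open>A \<in> so\<close>, of 1 2]
      by (simp add: so2_generator_def vec_eq_iff forall_2)
    then show "A \<in> range (\<lambda>c. c *\<^sub>R so2_generator)"
      by blast
  qed
qed

lemma lie_isomorphic_span_so2:
  fixes M :: "real^'n^'n"
  assumes "M \<noteq> 0"
  shows "lie_isomorphic (span {M}) (so :: (real^2^2) set)"
proof -
  obtain i j where ij: "M $ i $ j \<noteq> 0"
    using assms by (metis vec_eq_iff zero_index)
  define f where "f X = (X $ i $ j / M $ i $ j) *\<^sub>R so2_generator" for X :: "real^'n^'n"
  have f_scaleR: "f (c *\<^sub>R M) = c *\<^sub>R so2_generator" for c
    using ij by (simp add: f_def)
  have "linear f"
    by (rule linearI) (simp_all add: f_def add_divide_distrib scaleR_add_left)
  moreover have "bij_betw f (span {M}) so"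
  proof (rule bij_betw_imageI)
    have "so2_generator $ 2 $ 1 = 1"
      by (simp add: so2_generator_def)
    then show "inj_on f (span {M})"
      by (auto simp: span_singleton inj_on_def f_scaleR vec_eq_iff)
    show "f ` span {M} = so"
      by (simp add: span_singleton so2_eq_range image_image f_scaleR)
  qed
  moreover have "f (bracket X Y) = bracket (f X) (f Y)" if "X \<in> span {M}" "Y \<in> span {M}" for X Y
    using that by (auto simp: span_singleton f_def bracket_scaleR_self)
  ultimately show ?thesis
    unfolding lie_isomorphic_def by blast
qed

section \<open>Associative planes\<close>

locale associative_frame =
  fixes P :: "R7 set" and u v :: R7
  assumes associative: "associative P"
    and u_in: "u \<in> P" and v_in: "v \<in> P"
    and unit_u: "u \<bullet> u = 1" and unit_v: "v \<bullet> v = 1" and orthogonal_uv: "u \<bullet> v = 0"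
begin

definition w :: R7 where
  "w = cross7 u v"

lemma subspace_P: "subspace P"
  and dim_P: "dim P = 3"
  and cross7_in_P: "a \<in> P \<Longrightarrow> b \<in> P \<Longrightarrow> cross7 a b \<in> P"
  using associative unfolding associative_def by auto

lemma w_in: "w \<in> P"
  unfolding w_def by (rule cross7_in_P[OF u_in v_in])

lemma frame_inner [simp]:
  "u \<bullet> u = 1" "v \<bullet> v = 1" "w \<bullet> w = 1"
  "u \<bullet> v = 0" "v \<bullet> u = 0" "u \<bullet> w = 0" "w \<bullet> u = 0" "v \<bullet> w = 0" "w \<bullet> v = 0"
  using unit_u unit_v orthogonal_uv inner_cross7_cross7[of u v u]
  by (simp_all add: w_def inner_commute)

lemma frame_cross7 [simp]:
  "cross7 u v = w" "cross7 v w = u" "cross7 w u = v"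
  "cross7 v u = - w" "cross7 w v = - u" "cross7 u w = - v"
proof -
  show uv: "cross7 u v = w"
    by (simp add: w_def)
  show vw: "cross7 v w = u"
    by (simp add: w_def cross7_skew[of u v] cross7_minus_right cross7_cross7_self)
  show wu: "cross7 w u = v"
    by (simp add: w_def cross7_skew[of "cross7 u v" u] cross7_cross7_self)
  show "cross7 v u = - w" "cross7 w v = - u" "cross7 u w = - v"
    using uv vw wu by (metis cross7_skew)+
qed

lemma P_eq_span: "P = span {u, v, w}"
proof
  have "independent {u, v, w}"
    by (rule pairwise_orthogonal_independent)
      (auto simp: pairwise_def orthogonal_def dest: arg_cong[where f = "\<lambda>x. x \<bullet> x"])
  moreover have "card {u, v, w} = 3"
    using frame_inner by (metis card_3_iff inner_zero_left zero_neq_one)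
  ultimately show "P \<subseteq> span {u, v, w}"
    using u_in v_in w_in dim_P by (intro card_ge_dim_independent) auto
  show "span {u, v, w} \<subseteq> P"
    using u_in v_in w_in subspace_P by (intro span_minimal) auto
qed

definition proj :: "R7 \<Rightarrow> R7" where
  "proj a = (a \<bullet> u) *\<^sub>R u + (a \<bullet> v) *\<^sub>R v + (a \<bullet> w) *\<^sub>R w"

lemma linear_proj: "linear proj"
  by (rule linearI) (simp_all add: proj_def inner_add_left algebra_simps)

lemma proj_in: "proj a \<in> P"
  unfolding proj_def using subspace_P u_in v_in w_in
  by (intro subspace_add subspace_scale) auto

lemma proj_orthogonal: "a - proj a \<in> P\<^sup>\<bottom>"
proof -
  have "orthogonal (a - proj a) x" if "x \<in> span {u, v, w}" for x
    using that by (rule orthogonal_to_span)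
      (auto simp: orthogonal_def proj_def inner_diff_left inner_add_left)
  then have "orthogonal x (a - proj a)" if "x \<in> span {u, v, w}" for x
    using that orthogonal_commute by blast
  then show ?thesis
    unfolding orthogonal_comp_def P_eq_span[symmetric] by blast
qed

lemma inner_orthogonal_comp: "p \<in> P \<Longrightarrow> r \<in> P\<^sup>\<bottom> \<Longrightarrow> p \<bullet> r = 0"
  by (simp add: orthogonal_comp_def orthogonal_def)

lemma proj_eq_self:
  assumes "p \<in> P"
  shows "proj p = p"
proof -
  have "p - proj p \<in> P \<inter> P\<^sup>\<bottom>"
    using assms proj_in proj_orthogonal subspace_P by (simp add: subspace_diff)
  then show ?thesis
    using orthogonal_Int_0[OF subspace_P] by simp
qed

lemma proj_eq_0: "r \<in> P\<^sup>\<bottom> \<Longrightarrow> proj r = 0"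
  unfolding proj_def
  using inner_orthogonal_comp[OF u_in, of r] inner_orthogonal_comp[OF v_in, of r]
    inner_orthogonal_comp[OF w_in, of r]
  by (simp add: inner_commute)

lemma frame_expansion:
  "p \<in> P \<Longrightarrow> p = (p \<bullet> u) *\<^sub>R u + (p \<bullet> v) *\<^sub>R v + (p \<bullet> w) *\<^sub>R w"
  using proj_eq_self unfolding proj_def by simp

lemma chi_eq_0:
  assumes "a \<in> P" "b \<in> P" "c \<in> P"
  shows "chi a b c = 0"
proof -
  have lin1: "linear (\<lambda>x. chi x y z)" for y z
    by (rule linearI) (simp_all add: chi_def cross7_linear inner_add_left algebra_simps)
  have lin2: "linear (\<lambda>y. chi x y z)" for x z
    by (rule linearI) (simp_all add: chi_def cross7_linear inner_add_right algebra_simps)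
  have "chi x y z = 0" if "x \<in> {u, v, w}" "y \<in> {u, v, w}" "z \<in> {u, v, w}" for x y z
    using that by (auto simp: chi_def cross7_linear)
  then have "chi x y c = 0" if "x \<in> {u, v, w}" "y \<in> {u, v, w}" for x y
    by (rule linear_eq_0_on_span[OF linear_chi, where b = "{u, v, w}"])
      (use that assms(3) P_eq_span in auto)
  then have "chi x b c = 0" if "x \<in> {u, v, w}" for x
    by (rule linear_eq_0_on_span[OF lin2, where b = "{u, v, w}"])
      (use that assms(2) P_eq_span in auto)
  then show "chi a b c = 0"
    by (rule linear_eq_0_on_span[OF lin1, where b = "{u, v, w}"])
      (use assms(1) P_eq_span in auto)
qed

lemma cross7_cross7_in_P:
  "a \<in> P \<Longrightarrow> b \<in> P \<Longrightarrow> c \<in> P \<Longrightarrow>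
    cross7 a (cross7 b c) = (a \<bullet> c) *\<^sub>R b - (a \<bullet> b) *\<^sub>R c"
  using chi_eq_0[of a b c] by (simp add: chi_def algebra_simps)

lemma cross7_jacobi_in_P:
  assumes "s \<in> P" "s' \<in> P" "p \<in> P"
  shows "cross7 s (cross7 s' p) - cross7 s' (cross7 s p) = cross7 (cross7 s s') p"
proof -
  have "cross7 (cross7 s s') p = - cross7 p (cross7 s s')"
    by (rule cross7_skew)
  then have "cross7 (cross7 s s') p = (p \<bullet> s) *\<^sub>R s' - (p \<bullet> s') *\<^sub>R s"
    using cross7_cross7_in_P[OF assms(3,1,2)] by simp
  then show ?thesis
    using assms by (simp add: cross7_cross7_in_P inner_commute)
qed

lemma cross7_orthogonal_comp:
  assumes "p \<in> P" "r \<in> P\<^sup>\<bottom>"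
  shows "cross7 p r \<in> P\<^sup>\<bottom>"
proof -
  have "x \<bullet> cross7 p r = 0" if "x \<in> P" for x
  proof -
    have "x \<bullet> cross7 p r = cross7 x p \<bullet> r"
      by (simp add: inner_cross7_assoc)
    also have "\<dots> = 0"
      using inner_orthogonal_comp[OF cross7_in_P[OF that assms(1)] assms(2)] .
    finally show ?thesis .
  qed
  then show ?thesis
    by (simp add: orthogonal_comp_def orthogonal_def)
qed

lemma chi_orthogonal_comp:
  assumes "a \<in> P" "b \<in> P" "r \<in> P\<^sup>\<bottom>"
  shows "chi a b r = - cross7 (cross7 a b) r"
  using inner_orthogonal_comp[OF assms(1,3)] inner_orthogonal_comp[OF assms(2,3)]
  by (simp add: chi_def cross7_cross7_orthogonal)

definition theta :: "R7 \<Rightarrow> R7 \<Rightarrow> real^7^7" where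
  "theta s t = matrix (\<lambda>a. cross7 s (proj a) + cross7 t (a - proj a))"

lemma theta_apply: "theta s t *v a = cross7 s (proj a) + cross7 t (a - proj a)"
proof -
  have "linear (\<lambda>a. cross7 s (proj a) + cross7 t (a - proj a))"
    by (rule linearI)
      (simp_all add: linear_add[OF linear_proj] linear_scale[OF linear_proj] cross7_linear
        algebra_simps)
  then show ?thesis
    unfolding theta_def by (rule matrix_apply)
qed

lemma theta_apply_split:
  "p \<in> P \<Longrightarrow> r \<in> P\<^sup>\<bottom> \<Longrightarrow> theta s t *v (p + r) = cross7 s p + cross7 t r"
  using linear_add[OF linear_proj, of p r] by (simp add: theta_apply proj_eq_self proj_eq_0)

lemma theta_add: "theta s t + theta s' t' = theta (s + s') (t + t')"
  unfolding matrix_eq by (simp add: matrix_vector_mult_add_rdistrib theta_apply cross7_linear)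

lemma theta_scaleR: "c *\<^sub>R theta s t = theta (c *\<^sub>R s) (c *\<^sub>R t)"
  unfolding matrix_eq
  by (simp add: scaleR_matrix_vector_assoc[symmetric] theta_apply cross7_linear
      scaleR_add_right scaleR_diff_right)

lemma theta_zero [simp]: "theta 0 0 = 0"
  unfolding matrix_eq by (simp add: theta_apply)

lemma hook_eq_theta: "hook t = theta t t"
  unfolding matrix_eq by (simp add: hook_apply theta_apply cross7_linear)

lemma wedge_eq_theta:
  assumes "a \<in> P" "b \<in> P"
  shows "wedge a b = theta (cross7 a b) 0"
  unfolding matrix_eq
proof
  fix x
  have "c \<bullet> x = c \<bullet> proj x" if "c \<in> P" for c
    using inner_orthogonal_comp[OF that proj_orthogonal, of x] by (simp add: inner_diff_right)
  moreover have "cross7 (cross7 a b) (proj x) = (a \<bullet> proj x) *\<^sub>R b - (b \<bullet> proj x) *\<^sub>R a"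
    using cross7_cross7_in_P[OF proj_in assms] cross7_skew[of "cross7 a b"]
    by (simp add: inner_commute)
  ultimately show "wedge a b *v x = theta (cross7 a b) 0 *v x"
    using assms by (simp add: wedge_apply theta_apply)
qed

lemma PsiF_eq_theta:
  assumes "a \<in> P" "b \<in> P"
  shows "PsiF a b = theta 0 (- cross7 a b)"
  unfolding matrix_eq
proof
  fix x
  have "chi a b x = chi a b (proj x) + chi a b (x - proj x)"
    using linear_add[OF linear_chi[of a b], of "proj x" "x - proj x"] by simp
  then show "PsiF a b *v x = theta 0 (- cross7 a b) *v x"
    using assms by (simp add: PsiF_apply theta_apply chi_eq_0 proj_in chi_orthogonal_comp
        proj_orthogonal cross7_minus_left)
qed

lemma linear_theta_left: "linear (\<lambda>s. theta s 0)"
  and linear_theta_right: "linear (\<lambda>t. theta 0 t)"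
  by (rule linearI; simp add: theta_add theta_scaleR)+

lemma Lambda2_eq: "Lambda2 P = (\<lambda>s. theta s 0) ` P"
proof
  show "Lambda2 P \<subseteq> (\<lambda>s. theta s 0) ` P"
    unfolding Lambda2_def
    using wedge_eq_theta cross7_in_P linear_subspace_image[OF linear_theta_left subspace_P]
    by (intro span_minimal) blast+
  have "theta u 0 = wedge v w" "theta v 0 = wedge w u" "theta w 0 = wedge u v"
    using wedge_eq_theta u_in v_in w_in by simp_all
  then have "(\<lambda>s. theta s 0) ` {u, v, w} \<subseteq> {wedge a b |a b. a \<in> P \<and> b \<in> P}"
    using u_in v_in w_in by blast
  then have "span ((\<lambda>s. theta s 0) ` {u, v, w}) \<subseteq> Lambda2 P"
    unfolding Lambda2_def by (rule span_mono)
  moreover have "(\<lambda>s. theta s 0) ` P = span ((\<lambda>s. theta s 0) ` {u, v, w})"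
    unfolding P_eq_span by (rule span_linear_image[OF linear_theta_left, symmetric])
  ultimately show "(\<lambda>s. theta s 0) ` P \<subseteq> Lambda2 P"
    by simp
qed

lemma PsiS_eq: "PsiS P = (\<lambda>t. theta 0 t) ` P"
proof
  show "PsiS P \<subseteq> (\<lambda>t. theta 0 t) ` P"
    unfolding PsiS_def
    using PsiF_eq_theta cross7_in_P subspace_neg[OF subspace_P]
      linear_subspace_image[OF linear_theta_right subspace_P]
    by (intro span_minimal) blast+
  have "theta 0 u = PsiF w v" "theta 0 v = PsiF u w" "theta 0 w = PsiF v u"
    using PsiF_eq_theta u_in v_in w_in by simp_all
  then have "(\<lambda>t. theta 0 t) ` {u, v, w} \<subseteq> {PsiF a b |a b. a \<in> P \<and> b \<in> P}"
    using u_in v_in w_in by blast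
  then have "span ((\<lambda>t. theta 0 t) ` {u, v, w}) \<subseteq> PsiS P"
    unfolding PsiS_def by (rule span_mono)
  moreover have "(\<lambda>t. theta 0 t) ` P = span ((\<lambda>t. theta 0 t) ` {u, v, w})"
    unfolding P_eq_span by (rule span_linear_image[OF linear_theta_right, symmetric])
  ultimately show "(\<lambda>t. theta 0 t) ` P \<subseteq> PsiS P"
    by simp
qed

lemma hookset_eq: "hookset P = (\<lambda>t. theta t t) ` P"
  unfolding hookset_def hook_eq_theta by blast

lemma Theta_eq: "Theta P = {theta s t |s t. s \<in> P \<and> t \<in> P}"
proof -
  have "Theta P = {theta s 0 + theta 0 t |s t. s \<in> P \<and> t \<in> P}"
    unfolding Theta_def setsum_def Lambda2_eq PsiS_eq by blast
  then show ?thesis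
    by (simp add: theta_add)
qed

lemma theta_bracket:
  assumes "s \<in> P" "t \<in> P" "s' \<in> P" "t' \<in> P"
  shows "bracket (theta s t) (theta s' t') = theta (cross7 s s') ((-2) *\<^sub>R cross7 t t')"
  unfolding matrix_eq
proof
  fix a
  define p r where "p = proj a" and "r = a - proj a"
  have pr: "p \<in> P" "r \<in> P\<^sup>\<bottom>" "a = p + r"
    unfolding p_def r_def using proj_in proj_orthogonal by simp_all
  have "theta s t *v (theta s' t' *v a) = cross7 s (cross7 s' p) + cross7 t (cross7 t' r)"
    "theta s' t' *v (theta s t *v a) = cross7 s' (cross7 s p) + cross7 t' (cross7 t r)"
    using assms pr by (simp_all add: theta_apply_split cross7_in_P cross7_orthogonal_comp)
  moreover have "cross7 s (cross7 s' p) - cross7 s' (cross7 s p) = cross7 (cross7 s s') p"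
    using assms pr by (simp add: cross7_jacobi_in_P)
  moreover have "cross7 t (cross7 t' r) - cross7 t' (cross7 t r) = cross7 ((-2) *\<^sub>R cross7 t t') r"
    using assms pr by (simp add: cross7_commutator_orthogonal inner_orthogonal_comp)
  moreover have "theta (cross7 s s') ((-2) *\<^sub>R cross7 t t') *v a
      = cross7 (cross7 s s') p + cross7 ((-2) *\<^sub>R cross7 t t') r"
    using assms pr by (simp add: theta_apply_split)
  ultimately show "bracket (theta s t) (theta s' t') *v a
      = theta (cross7 s s') ((-2) *\<^sub>R cross7 t t') *v a"
    by (simp add: bracket_apply algebra_simps)
qed

definition frame_coords :: "R7 \<Rightarrow> real^3" where
  "frame_coords a = vector [a \<bullet> u, a \<bullet> v, a \<bullet> w]"

lemma frame_coords_eq_iff: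
  assumes "p \<in> P" "q \<in> P"
  shows "frame_coords p = frame_coords q \<longleftrightarrow> p = q"
proof
  assume "frame_coords p = frame_coords q"
  then have "(p \<bullet> u) *\<^sub>R u + (p \<bullet> v) *\<^sub>R v + (p \<bullet> w) *\<^sub>R w
      = (q \<bullet> u) *\<^sub>R u + (q \<bullet> v) *\<^sub>R v + (q \<bullet> w) *\<^sub>R w"
    unfolding frame_coords_def vec_eq_iff forall_3 by simp
  then show "p = q"
    by (simp only: frame_expansion[OF assms(1), symmetric] frame_expansion[OF assms(2), symmetric])
qed simp

lemma frame_coords_surj: obtains p where "p \<in> P" "frame_coords p = x"
proof
  show "x$1 *\<^sub>R u + x$2 *\<^sub>R v + x$3 *\<^sub>R w \<in> P"
    using subspace_P u_in v_in w_in by (intro subspace_add subspace_scale) auto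
  show "frame_coords (x$1 *\<^sub>R u + x$2 *\<^sub>R v + x$3 *\<^sub>R w) = x"
    by (simp add: frame_coords_def vec_eq_iff forall_3 inner_add_left)
qed

lemma frame_coords_scaleR: "frame_coords (c *\<^sub>R a) = c *\<^sub>R frame_coords a"
  by (simp add: frame_coords_def vec_eq_iff forall_3)

lemma frame_coords_cross7:
  assumes "p \<in> P" "q \<in> P"
  shows "frame_coords (cross7 p q) = cross3 (frame_coords p) (frame_coords q)"
proof -
  have pq: "cross7 p q = cross7 ((p \<bullet> u) *\<^sub>R u + (p \<bullet> v) *\<^sub>R v + (p \<bullet> w) *\<^sub>R w)
      ((q \<bullet> u) *\<^sub>R u + (q \<bullet> v) *\<^sub>R v + (q \<bullet> w) *\<^sub>R w)"
    using frame_expansion[OF assms(1)] frame_expansion[OF assms(2)] by simp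
  show ?thesis
    unfolding frame_coords_def pq
    by (simp add: cross3_def vec_eq_iff forall_3 cross7_linear inner_add_left algebra_simps)
qed

lemma exists_unit_orthogonal_comp: obtains z where "z \<in> P\<^sup>\<bottom>" "z \<bullet> z = 1"
proof -
  have "dim P < DIM(R7)"
    using dim_P by simp
  then obtain x where x: "x \<noteq> 0" "\<And>y. y \<in> span P \<Longrightarrow> orthogonal x y"
    using orthogonal_to_subspace_exists by blast
  show ?thesis
  proof
    show "(1 / norm x) *\<^sub>R x \<in> P\<^sup>\<bottom>"
      using x(2)[OF span_base] by (auto simp: orthogonal_comp_def orthogonal_def inner_commute)
    show "(1 / norm x) *\<^sub>R x \<bullet> (1 / norm x) *\<^sub>R x = 1"
      using x(1) by (simp add: power2_norm_eq_inner[symmetric] power2_eq_square)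
  qed
qed

text \<open>Scaling the t-coordinates by -2 turns [theta 0 t, theta 0 t'] = theta 0 (-2 t \<times> t') into
  the cross product of real^3; they are read off on a unit vector z orthogonal to P.\<close>

definition so4_map :: "R7 \<Rightarrow> real^7^7 \<Rightarrow> real^4^4" where
  "so4_map z X = so4_of (vector [(X *v v) \<bullet> w, (X *v w) \<bullet> u, (X *v u) \<bullet> v])
     (vector [2 * ((X *v z) \<bullet> cross7 z u), 2 * ((X *v z) \<bullet> cross7 z v),
              2 * ((X *v z) \<bullet> cross7 z w)])"

lemma linear_so4_map: "linear (so4_map z)"
  by (rule linearI)
    (simp_all add: so4_map_def vec_eq_iff forall_4 so4_of_entries matrix_vector_mult_add_rdistrib
      scaleR_matrix_vector_assoc[symmetric] inner_add_left field_simps)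

lemma so4_map_theta:
  assumes z: "z \<in> P\<^sup>\<bottom>" "z \<bullet> z = 1" and "s \<in> P" "t \<in> P"
  shows "so4_map z (theta s t) = so4_of (frame_coords s) ((-2) *\<^sub>R frame_coords t)"
proof -
  have on_P: "theta s t *v x = cross7 s x" if "x \<in> P" for x
    using theta_apply_split[OF that subspace_0[OF subspace_orthogonal_comp]] by simp
  have on_z: "theta s t *v z = cross7 t z"
    using theta_apply_split[OF subspace_0[OF subspace_P] z(1)] by simp
  have t_inner: "cross7 t z \<bullet> cross7 z x = - (t \<bullet> x)" if "x \<in> P" for x
  proof -
    have "cross7 t z \<bullet> cross7 z x = - (cross7 t z \<bullet> cross7 x z)"
      by (simp add: cross7_skew[of z x])
    also have "\<dots> = - (t \<bullet> x)"
      using inner_cross7_cross7[of t z x] inner_orthogonal_comp[OF that z(1)]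
        inner_orthogonal_comp[OF \<open>t \<in> P\<close> z(1)] z(2)
      by (simp add: inner_commute)
    finally show ?thesis .
  qed
  have "vector [(theta s t *v v) \<bullet> w, (theta s t *v w) \<bullet> u, (theta s t *v u) \<bullet> v] = frame_coords s"
    using u_in v_in w_in by (simp add: on_P frame_coords_def inner_cross7_assoc)
  moreover have "vector [2 * ((theta s t *v z) \<bullet> cross7 z u), 2 * ((theta s t *v z) \<bullet> cross7 z v),
      2 * ((theta s t *v z) \<bullet> cross7 z w)] = (-2) *\<^sub>R frame_coords t"
    using u_in v_in w_in by (simp add: on_z t_inner frame_coords_def vec_eq_iff forall_3)
  ultimately show ?thesis
    by (simp add: so4_map_def)
qed

lemma theta_eq_iff:
  assumes "s \<in> P" "t \<in> P" "s' \<in> P" "t' \<in> P"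
  shows "theta s t = theta s' t' \<longleftrightarrow> s = s' \<and> t = t'"
proof
  obtain z where z: "z \<in> P\<^sup>\<bottom>" "z \<bullet> z = 1"
    by (rule exists_unit_orthogonal_comp)
  assume "theta s t = theta s' t'"
  then have "so4_map z (theta s t) = so4_map z (theta s' t')"
    by simp
  then show "s = s' \<and> t = t'"
    using assms by (simp add: so4_map_theta[OF z] so4_of_eq_iff frame_coords_eq_iff)
qed simp

lemma lie_subalgebra_Theta: "lie_subalgebra (Theta P)"
  unfolding lie_subalgebra_def
proof (intro conjI ballI subspace_Theta)
  fix X Y
  assume "X \<in> Theta P" "Y \<in> Theta P"
  then obtain s t s' t' where st: "s \<in> P" "t \<in> P" "s' \<in> P" "t' \<in> P"
    and XY: "X = theta s t" "Y = theta s' t'"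
    unfolding Theta_eq by blast
  have "cross7 s s' \<in> P" "(-2) *\<^sub>R cross7 t t' \<in> P"
    using st cross7_in_P subspace_scale[OF subspace_P] by blast+
  then show "bracket X Y \<in> Theta P"
    unfolding XY theta_bracket[OF st] Theta_eq by blast
qed

lemma so4_map_bij:
  assumes z: "z \<in> P\<^sup>\<bottom>" "z \<bullet> z = 1"
  shows "bij_betw (so4_map z) (Theta P) so"
proof (rule bij_betw_imageI)
  note image = so4_map_theta[OF z]
  show "inj_on (so4_map z) (Theta P)"
    unfolding Theta_eq by (auto intro!: inj_onI simp: image so4_of_eq_iff frame_coords_eq_iff)
  show "so4_map z ` Theta P = so"
  proof
    show "so4_map z ` Theta P \<subseteq> so"
      unfolding Theta_eq using image so4_of_in_so by auto
    show "so \<subseteq> so4_map z ` Theta P"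
    proof
      fix A :: "real^4^4"
      assume "A \<in> so"
      then obtain x y where A: "A = so4_of x y"
        using so4_of_surj by blast
      obtain s t where "s \<in> P" "frame_coords s = x" "t \<in> P" "frame_coords t = (- 1 / 2) *\<^sub>R y"
        using frame_coords_surj by metis
      then have "A = so4_map z (theta s t)"
        by (simp add: A image)
      with \<open>s \<in> P\<close> \<open>t \<in> P\<close> show "A \<in> so4_map z ` Theta P"
        unfolding Theta_eq by blast
    qed
  qed
qed

lemma so4_map_bracket:
  assumes z: "z \<in> P\<^sup>\<bottom>" "z \<bullet> z = 1" and "X \<in> Theta P" "Y \<in> Theta P"
  shows "so4_map z (bracket X Y) = bracket (so4_map z X) (so4_map z Y)"
proof -
  obtain s t s' t' where st: "s \<in> P" "t \<in> P" "s' \<in> P" "t' \<in> P"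
    and XY: "X = theta s t" "Y = theta s' t'"
    using assms(3,4) unfolding Theta_eq by blast
  have "cross7 s s' \<in> P" "(-2) *\<^sub>R cross7 t t' \<in> P"
    using st cross7_in_P subspace_scale[OF subspace_P] by blast+
  moreover have "frame_coords ((-2) *\<^sub>R cross7 t t')
      = (-2) *\<^sub>R cross3 (frame_coords t) (frame_coords t')"
    using st by (simp only: frame_coords_scaleR frame_coords_cross7)
  ultimately show ?thesis
    unfolding XY theta_bracket[OF st] using st
    by (simp only: so4_map_theta[OF z] so4_of_bracket frame_coords_cross7 cross_mult_left
        cross_mult_right scaleR_scaleR)
qed

lemma lie_isomorphic_Theta_so4: "lie_isomorphic (Theta P) (so :: (real^4^4) set)"
proof -
  obtain z where "z \<in> P\<^sup>\<bottom>" "z \<bullet> z = 1"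
    by (rule exists_unit_orthogonal_comp)
  then show ?thesis
    unfolding lie_isomorphic_def using linear_so4_map so4_map_bij so4_map_bracket by blast
qed

lemma Lambda2_Int_PsiS: "Lambda2 P \<inter> PsiS P = {0}"
proof -
  have "theta s 0 = theta 0 t \<longleftrightarrow> s = 0 \<and> t = 0" if "s \<in> P" "t \<in> P" for s t
    using that theta_eq_iff subspace_0[OF subspace_P] by blast
  then show ?thesis
    unfolding Lambda2_eq PsiS_eq using subspace_0[OF subspace_P] by force
qed

lemma Lambda2_Int_hookset: "Lambda2 P \<inter> hookset P = {0}"
proof -
  have "theta s 0 = theta t t \<longleftrightarrow> s = 0 \<and> t = 0" if "s \<in> P" "t \<in> P" for s t
    using that theta_eq_iff subspace_0[OF subspace_P] by blast
  then show ?thesis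
    unfolding Lambda2_eq hookset_eq using subspace_0[OF subspace_P] by force
qed

lemma form_inner_Lambda2_PsiS:
  assumes "X \<in> Lambda2 P" "Y \<in> PsiS P"
  shows "form_inner X Y = 0"
proof -
  obtain s t where "s \<in> P" "t \<in> P" and XY: "X = theta s 0" "Y = theta 0 t"
    using assms unfolding Lambda2_eq PsiS_eq by blast
  then have "(X *v x) \<bullet> (Y *v x) = 0" for x
    using inner_orthogonal_comp[OF cross7_in_P[OF \<open>s \<in> P\<close> proj_in]
        cross7_orthogonal_comp[OF \<open>t \<in> P\<close> proj_orthogonal]]
    by (simp add: theta_apply)
  then show ?thesis
    by (simp add: form_inner_eq_sum)
qed

lemma Theta_eq_setsum_hookset: "Theta P = setsum (Lambda2 P) (hookset P)"
proof -
  have "theta s t = theta (s - t) 0 + theta t t" for s t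
    by (simp add: theta_add)
  moreover have "theta d 0 + theta t t = theta (d + t) t" for d t
    by (simp add: theta_add)
  ultimately show ?thesis
    unfolding Theta_eq setsum_def Lambda2_eq hookset_eq
    using subspace_diff[OF subspace_P] subspace_add[OF subspace_P] by blast
qed

lemma hook_in_Theta: "t \<in> P \<Longrightarrow> hook t \<in> Theta P"
  unfolding Theta_eq hook_eq_theta by blast

end

lemma associative_frame_exists:
  assumes "associative P"
  obtains u v where "associative_frame P u v"
proof -
  obtain B where B: "B \<subseteq> P" "pairwise orthogonal B" "\<And>x. x \<in> B \<Longrightarrow> norm x = 1"
      "card B = dim P"
    using orthonormal_basis_subspace[of P] assms unfolding associative_def by metis
  then obtain a b c where "B = {a, b, c}" "a \<noteq> b"
    using assms unfolding associative_def by (auto simp: card_3_iff)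
  with B have "associative_frame P a b"
    using assms by unfold_locales (auto simp: pairwise_def orthogonal_def norm_eq_1)
  then show ?thesis ..
qed

section \<open>Intersections of associative planes\<close>

lemma dim_Int_hyperplane_ge:
  fixes a :: "'a::euclidean_space"
  assumes "subspace S"
  shows "dim S \<le> dim (S \<inter> {x. a \<bullet> x = 0}) + 1"
proof (cases "a = 0")
  case False
  have "dim {x + y |x y. x \<in> S \<and> y \<in> {x. a \<bullet> x = 0}} + dim (S \<inter> {x. a \<bullet> x = 0})
      = dim S + dim {x. a \<bullet> x = 0}"
    by (rule dim_sums_Int[OF assms subspace_hyperplane])
  moreover have "dim {x + y |x y. x \<in> S \<and> y \<in> {x. a \<bullet> x = 0}} \<le> DIM('a)"
    using dim_subset_UNIV by simp
  ultimately show ?thesis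
    using dim_hyperplane[OF False] DIM_positive[where 'a = 'a] by linarith
qed simp

lemma cross7_image_eq_hyperplane:
  assumes "associative P" "d \<in> P" "d \<noteq> 0"
  shows "cross7 d ` P = P \<inter> {x. d \<bullet> x = 0}"
proof
  have closed: "a \<in> P \<Longrightarrow> b \<in> P \<Longrightarrow> cross7 a b \<in> P" for a b
    using assms(1) by (simp add: associative_def)
  then show "cross7 d ` P \<subseteq> P \<inter> {x. d \<bullet> x = 0}"
    using assms(2) by auto
  show "P \<inter> {x. d \<bullet> x = 0} \<subseteq> cross7 d ` P"
  proof
    fix x
    assume x: "x \<in> P \<inter> {x. d \<bullet> x = 0}"
    have "(- 1 / (d \<bullet> d)) *\<^sub>R cross7 d x \<in> P"
      using assms(1) closed[OF assms(2)] x unfolding associative_def by (blast intro: subspace_scale)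
    moreover have "cross7 d ((- 1 / (d \<bullet> d)) *\<^sub>R cross7 d x) = x"
      using x assms(3) by (intro cross7_cross7_inverse) auto
    ultimately show "x \<in> cross7 d ` P"
      by (metis image_eqI)
  qed
qed

lemma dim_cross7_image:
  assumes "associative P" "d \<in> P"
  shows "dim (cross7 d ` P) = (if d = 0 then 0 else 2)"
proof (cases "d = 0")
  case True
  then show ?thesis
    using assms(2) by auto
next
  case False
  let ?H = "{x. d \<bullet> x = 0}"
  have P: "subspace P" "dim P = 3"
    using assms(1) by (simp_all add: associative_def)
  have "d \<notin> ?H"
    using False by simp
  then have "P \<inter> ?H \<subset> P"
    using assms(2) by blast
  moreover have "subspace (P \<inter> ?H)"
    by (rule subspace_inter[OF P(1) subspace_hyperplane])
  ultimately have "span (P \<inter> ?H) \<subset> span P"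
    using P(1) by (simp add: span_eq_iff[THEN iffD2])
  then have "dim (P \<inter> ?H) < dim P"
    by (rule dim_psubset)
  moreover have "dim P \<le> dim (P \<inter> ?H) + 1"
    by (rule dim_Int_hyperplane_ge[OF P(1)])
  ultimately show ?thesis
    using cross7_image_eq_hyperplane[OF assms False] P(2) False by simp
qed

lemma associative_Int_dim_le:
  assumes P: "associative P" and Q: "associative Q" and "P \<noteq> Q"
  shows "dim (P \<inter> Q) \<le> 1"
proof (rule ccontr)
  assume "\<not> dim (P \<inter> Q) \<le> 1"
  have "subspace (P \<inter> Q)"
    using P Q unfolding associative_def by (blast intro: subspace_inter)
  then obtain B where B: "B \<subseteq> P \<inter> Q" "pairwise orthogonal B" "\<And>x. x \<in> B \<Longrightarrow> norm x = 1"
      "card B = dim (P \<inter> Q)"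
    using orthonormal_basis_subspace by metis
  with \<open>\<not> dim (P \<inter> Q) \<le> 1\<close> have "\<not> card B \<le> Suc 0"
    by simp
  then have "finite B" "\<not> card B \<le> Suc 0"
    using card.infinite by fastforce+
  then obtain a b where ab: "a \<in> B" "b \<in> B" "a \<noteq> b"
    using card_le_Suc0_iff_eq by blast
  have "associative_frame P a b" "associative_frame Q a b"
    using ab B P Q by (unfold_locales; auto simp: pairwise_def orthogonal_def norm_eq_1)+
  then interpret FP: associative_frame P a b + FQ: associative_frame Q a b .
  have "P = span {a, b, cross7 a b}"
    using FP.P_eq_span unfolding FP.w_def .
  moreover have "Q = span {a, b, cross7 a b}"
    using FQ.P_eq_span unfolding FQ.w_def .
  ultimately show False
    using \<open>P \<noteq> Q\<close> by simp
qed

lemma cross7_eq_0_if_range_in_sums: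
  assumes P: "associative P" and Q: "associative Q" and "d \<in> P" "d' \<in> Q"
    and range: "range (cross7 e) \<subseteq> {x + y |x y. x \<in> cross7 d ` P \<and> y \<in> cross7 d' ` Q}"
  shows "e = 0"
proof (rule ccontr)
  assume "e \<noteq> 0"
  let ?S = "cross7 d ` P" and ?T = "cross7 d' ` Q"
  have "subspace ?S" "subspace ?T"
    using P Q by (simp_all add: associative_def linear_subspace_image linear_cross7)
  have "dim (range (cross7 e)) \<le> dim {x + y |x y. x \<in> ?S \<and> y \<in> ?T}"
    using range by (rule dim_subset)
  also have "\<dots> \<le> dim ?S + dim ?T"
    using dim_sums_Int[OF \<open>subspace ?S\<close> \<open>subspace ?T\<close>] by linarith
  also have "\<dots> \<le> 4"
    using dim_cross7_image[OF P \<open>d \<in> P\<close>] dim_cross7_image[OF Q \<open>d' \<in> Q\<close>] by simp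
  finally show False
    using range_cross7[OF \<open>e \<noteq> 0\<close>] dim_hyperplane[OF \<open>e \<noteq> 0\<close>] by simp
qed

lemma cross7_eq_0_if_image_subset:
  assumes P: "associative P" and Q: "associative Q" and "P \<noteq> Q"
    and "d \<in> P" "cross7 d ` P \<subseteq> Q"
  shows "d = 0"
proof (rule ccontr)
  assume "d \<noteq> 0"
  have "cross7 d ` P \<subseteq> P \<inter> Q"
    using P \<open>d \<in> P\<close> \<open>cross7 d ` P \<subseteq> Q\<close> by (auto simp: associative_def)
  then have "dim (cross7 d ` P) \<le> 1"
    using dim_subset associative_Int_dim_le[OF P Q \<open>P \<noteq> Q\<close>] order_trans by blast
  then show False
    using dim_cross7_image[OF P \<open>d \<in> P\<close>] \<open>d \<noteq> 0\<close> by simp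
qed

lemma Theta_Int_Theta_eq:
  assumes P: "associative P" and Q: "associative Q" and "P \<noteq> Q"
  shows "Theta P \<inter> Theta Q = hook ` (P \<inter> Q)"
proof
  obtain u v u' v' where "associative_frame P u v" "associative_frame Q u' v'"
    using associative_frame_exists P Q by metis
  then interpret A: associative_frame P u v + B: associative_frame Q u' v' .
  show "hook ` (P \<inter> Q) \<subseteq> Theta P \<inter> Theta Q"
    using A.hook_in_Theta B.hook_in_Theta by auto
  show "Theta P \<inter> Theta Q \<subseteq> hook ` (P \<inter> Q)"
  proof
    fix X
    assume "X \<in> Theta P \<inter> Theta Q"
    then obtain s t s' t' where st: "s \<in> P" "t \<in> P" "s' \<in> Q" "t' \<in> Q"
      and X: "X = A.theta s t" "X = B.theta s' t'"
      unfolding A.Theta_eq B.Theta_eq by blast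
    define d d' e where "d = s - t" and "d' = s' - t'" and "e = t - t'"
    have d: "d \<in> P" "- d \<in> P" "d' \<in> Q"
      using st A.subspace_P B.subspace_P by (simp_all add: d_def d'_def subspace_diff subspace_neg)
    have key: "cross7 e a = cross7 (- d) (A.proj a) + cross7 d' (B.proj a)" for a
      using arg_cong[OF X(2), of "\<lambda>X. X *v a"] unfolding X(1) A.theta_apply B.theta_apply
      by (simp add: d_def d'_def e_def cross7_linear algebra_simps)
    then have "range (cross7 e) \<subseteq> {x + y |x y. x \<in> cross7 (- d) ` P \<and> y \<in> cross7 d' ` Q}"
      using A.proj_in B.proj_in by blast
    then have "e = 0"
      by (rule cross7_eq_0_if_range_in_sums[OF P Q d(2,3)])
    have "cross7 d p = cross7 d' (B.proj p)" if "p \<in> P" for p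
      using key[of p] \<open>e = 0\<close> by (simp add: A.proj_eq_self[OF that] cross7_minus_left)
    then have "cross7 d ` P \<subseteq> Q"
      using B.cross7_in_P[OF d(3) B.proj_in] by auto
    then have "d = 0"
      by (rule cross7_eq_0_if_image_subset[OF P Q \<open>P \<noteq> Q\<close> d(1)])
    then have "X = hook t" "t \<in> Q"
      using X(1) st(4) \<open>e = 0\<close> by (simp_all add: d_def e_def A.hook_eq_theta)
    with st(2) show "X \<in> hook ` (P \<inter> Q)"
      by blast
  qed
qed

lemma Theta_Int_Theta_eq_span:
  assumes P: "associative P" and Q: "associative Q" and "P \<noteq> Q"
    and "dim (P \<inter> Q) = 1" "v \<in> P \<inter> Q" "v \<noteq> 0"
  shows "Theta P \<inter> Theta Q = span {hook v}"
proof -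
  have "subspace (P \<inter> Q)"
    using P Q unfolding associative_def by (blast intro: subspace_inter)
  then have "P \<inter> Q = span {v}"
    using assms(4-6) by (intro antisym card_ge_dim_independent span_minimal) auto
  then show ?thesis
    using span_linear_image[OF linear_hook, of "{v}"] by (simp add: Theta_Int_Theta_eq[OF P Q \<open>P \<noteq> Q\<close>])
qed

theorem theorem4p14:
  shows
  "(\<forall>P. associative P \<longrightarrow>
      lie_subalgebra (Theta P)
    \<and> lie_isomorphic (Theta P) (so :: (real^4^4) set)
    \<and> Lambda2 P \<inter> PsiS P = {0}
    \<and> (\<forall>X\<in>Lambda2 P. \<forall>Y\<in>PsiS P. form_inner X Y = 0)
    \<and> Theta P = setsum (Lambda2 P) (hookset P)
    \<and> Lambda2 P \<inter> hookset P = {0})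
  \<and> (\<forall>P Q. associative P \<longrightarrow> associative Q \<longrightarrow> P \<noteq> Q \<longrightarrow>
      lie_subalgebra (Theta P \<inter> Theta Q)
    \<and> (P \<inter> Q = {0} \<longrightarrow> Theta P \<inter> Theta Q = {0})
    \<and> (\<forall>v. dim (P \<inter> Q) = 1 \<longrightarrow> v \<in> P \<inter> Q \<longrightarrow> norm v = 1 \<longrightarrow>
          Theta P \<inter> Theta Q = span {hook v}
        \<and> lie_isomorphic (Theta P \<inter> Theta Q) (so :: (real^2^2) set)))"
proof (intro conjI allI impI)
  fix P
  assume "associative P"
  then obtain u v where "associative_frame P u v"
    by (rule associative_frame_exists)
  then interpret associative_frame P u v .
  show "lie_subalgebra (Theta P)"
    by (rule lie_subalgebra_Theta)
  show "lie_isomorphic (Theta P) (so :: (real^4^4) set)"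
    by (rule lie_isomorphic_Theta_so4)
  show "Lambda2 P \<inter> PsiS P = {0}"
    by (rule Lambda2_Int_PsiS)
  show "\<forall>X\<in>Lambda2 P. \<forall>Y\<in>PsiS P. form_inner X Y = 0"
    using form_inner_Lambda2_PsiS by blast
  show "Theta P = setsum (Lambda2 P) (hookset P)"
    by (rule Theta_eq_setsum_hookset)
  show "Lambda2 P \<inter> hookset P = {0}"
    by (rule Lambda2_Int_hookset)
next
  fix P Q
  assume P: "associative P" and Q: "associative Q" and "P \<noteq> Q"
  obtain u1 v1 u2 v2 where "associative_frame P u1 v1" "associative_frame Q u2 v2"
    using associative_frame_exists P Q by metis
  then interpret A: associative_frame P u1 v1 + B: associative_frame Q u2 v2 .
  show "lie_subalgebra (Theta P \<inter> Theta Q)"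
    using A.lie_subalgebra_Theta B.lie_subalgebra_Theta by (rule lie_subalgebra_Int)
  show "Theta P \<inter> Theta Q = {0}" if "P \<inter> Q = {0}"
    using Theta_Int_Theta_eq[OF P Q \<open>P \<noteq> Q\<close>] that by (simp add: hook_eq_0_iff)
  fix v
  assume line: "dim (P \<inter> Q) = 1" "v \<in> P \<inter> Q" "norm v = 1"
  then have "v \<noteq> 0"
    by auto
  then show span: "Theta P \<inter> Theta Q = span {hook v}"
    by (rule Theta_Int_Theta_eq_span[OF P Q \<open>P \<noteq> Q\<close> line(1,2)])
  show "lie_isomorphic (Theta P \<inter> Theta Q) (so :: (real^2^2) set)"
    unfolding span using \<open>v \<noteq> 0\<close> by (simp add: lie_isomorphic_span_so2 hook_eq_0_iff)
qed

end
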